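(* Let $K$ be a field of characteristic $p>0$, $e\in\mathbb N_{>0}$, $m\in\mathbb N_{>0}$. Every $m$-truncated $e$-dimensional HS-derivation $(D_{\mathbf i})_{\mathbf i\in[p^m]^e}$ on $K$ (over $\mathbb F_p$) extends to an $e$-dimensional HS-derivation $(D'_{\mathbf i})_{\mathbf i\in\mathbb N^e}$ on $K$, i.e. $D'_{\mathbf i}=D_{\mathbf i}$ for all $\mathbf i\in[p^m]^e$.
   Context: For $m\in\mathbb N_{>0}\cup\{\infty\}$ and a ring $R$ of characteristic $p$ put $R[\bar v]:=R[X_1,\dots,X_e]/(X_1^{p^m},\dots,X_e^{p^m})$, with $v_i$ the image of $X_i$ (for $m=\infty$, $R[\bar v]:=R[[X_1,\dots,X_e]]$). Let $[p^m]=\{0,\dots,p^m-1\}$ ($[p^\infty]=\mathbb N$), $\bar v^{\mathbf i}=v_1^{i_1}\cdots v_e^{i_e}$. An $m$-truncated $e$-dimensional HS-derivation on $R$ (over $\mathbb F_p$) is a family $(D_{\mathbf i}:R\to R)_{\mathbf i\in[p^m]^e}$ such that $r\mapsto\sum_{\mathbf i}D_{\mathbf i}(r)\bar v^{\mathbf i}$ is a ring homomorphism $R\to R[\bar v]$ and $D_{\mathbf 0}=\mathrm{id}_R$; for $m=\infty$ it is called an $e$-dimensional HS-derivation. *)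

theory Defs
  imports Main
begin

text \<open>Multi-indices in N^e are represented as functions nat => nat vanishing
  outside {..<e}. The index set [p^m]^e is trunc_idx e (p^m).\<close>

definition mindex :: "nat \<Rightarrow> (nat \<Rightarrow> nat) set" where
  "mindex e = {i. \<forall>l\<ge>e. i l = 0}"

definition trunc_idx :: "nat \<Rightarrow> nat \<Rightarrow> (nat \<Rightarrow> nat) set" where
  "trunc_idx e N = {i \<in> mindex e. \<forall>l<e. i l < N}"

text \<open>HS_family I D: the map r |-> sum_i D_i(r) v^i is a ring homomorphism
  R -> R[v] (coefficientwise, for all coefficient indices k in I) and D_0 = id.
  With I = trunc_idx e (p^m) this is R[X]/(X_1^(p^m),...,X_e^(p^m)) (products
  of monomials with some exponent >= p^m vanish, so the coefficient of v^k,
  k in I, of a product is the sum over i + j = k); with I = mindex e it is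
  the power series ring. Additive maps are automatically F_p-linear.\<close>

definition HS_family :: "(nat \<Rightarrow> nat) set \<Rightarrow> ((nat \<Rightarrow> nat) \<Rightarrow> 'a::comm_ring_1 \<Rightarrow> 'a) \<Rightarrow> bool" where
  "HS_family I D \<longleftrightarrow>
     D (\<lambda>_. 0) = id \<and>
     (\<forall>k\<in>I. \<forall>x y. D k (x + y) = D k x + D k y) \<and>
     (\<forall>k\<in>I. D k 1 = (if k = (\<lambda>_. 0) then 1 else 0)) \<and>
     (\<forall>k\<in>I. \<forall>x y. D k (x * y) =
        (\<Sum>i\<in>{i. \<forall>l. i l \<le> k l}. D i x * D (\<lambda>l. k l - i l) y))"

definition truncated_HS_derivation ::
  "nat \<Rightarrow> nat \<Rightarrow> ((nat \<Rightarrow> nat) \<Rightarrow> 'a::comm_ring_1 \<Rightarrow> 'a) \<Rightarrow> bool" where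
  "truncated_HS_derivation m e D \<longleftrightarrow> HS_family (trunc_idx e (CHAR('a) ^ m)) D"

definition HS_derivation :: "nat \<Rightarrow> ((nat \<Rightarrow> nat) \<Rightarrow> 'a::comm_ring_1 \<Rightarrow> 'a) \<Rightarrow> bool" where
  "HS_derivation e D \<longleftrightarrow> HS_family (mindex e) D"

end

theory Submission
  imports Defs "HOL-Computational_Algebra.Polynomial_Factorial"
begin

text \<open>An \<open>m\<close>-truncated HS-derivation on \<open>K\<close> is a ring homomorphism
  \<open>K \<rightarrow> K[v]/(v\<^sub>1\<^sup>N, \<dots>, v\<^sub>e\<^sup>N)\<close>, \<open>N = p\<^sup>m\<close>, lifting the identity, and a full
  HS-derivation is a compatible system of these for all \<open>N\<close>. So it suffices to lift such a
  homomorphism \<open>\<phi>\<close> from precision \<open>N\<close> to precision \<open>pN\<close>. On \<open>K\<^sup>p\<close> the lift is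
  forced, \<open>x\<^sup>p \<mapsto> \<phi>(x)\<^sup>p\<close>, and well defined because raising to the \<open>p\<close>-th power
  multiplies the precision by \<open>p\<close>. By Zorn's lemma there is a maximal lift defined on a subring
  \<open>L \<supseteq> K\<^sup>p\<close>. If \<open>a \<notin> L\<close>, then \<open>a\<close> is \<open>p\<close>-independent over \<open>L\<close>, so
  \<open>L[a] = L[X]/(X\<^sup>p - a\<^sup>p)\<close>, and \<open>f(a) \<mapsto> f(\<phi>(a))\<close> extends the lift, since
  \<open>\<phi>(a)\<^sup>p\<close> is already determined at precision \<open>pN\<close>; hence \<open>L = K\<close>. Iterating
  \<open>N \<mapsto> pN\<close> and taking the limit gives the HS-derivation.\<close>

section \<open>Multi-indices\<close>

definition finite_supp :: "(nat \<Rightarrow> nat) \<Rightarrow> bool" where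
  "finite_supp k \<longleftrightarrow> finite {l. k l \<noteq> 0}"

definition below :: "(nat \<Rightarrow> nat) \<Rightarrow> (nat \<Rightarrow> nat) set" where
  "below k = {i. \<forall>l. i l \<le> k l}"

lemma finite_below:
  assumes "finite_supp k"
  shows "finite (below k)"
proof -
  let ?S = "{l. k l \<noteq> 0}" and ?B = "Max (k ` {l. k l \<noteq> 0})"
  have "below k \<subseteq> {f. \<forall>l. (l \<in> ?S \<longrightarrow> f l \<in> {0..?B}) \<and> (l \<notin> ?S \<longrightarrow> f l = 0)}"
  proof
    fix i assume "i \<in> below k"
    then have le: "i l \<le> k l" for l
      by (simp add: below_def)
    have "k l \<le> ?B" if "l \<in> ?S" for l
      using assms that by (intro Max_ge) (auto simp: finite_supp_def)
    with le show "i \<in> {f. \<forall>l. (l \<in> ?S \<longrightarrow> f l \<in> {0..?B}) \<and> (l \<notin> ?S \<longrightarrow> f l = 0)}"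
      by (auto intro: le_trans) (metis le_zero_eq)
  qed
  moreover have "finite {f. \<forall>l. (l \<in> ?S \<longrightarrow> f l \<in> {0..?B}) \<and> (l \<notin> ?S \<longrightarrow> f l = (0::nat))}"
    using assms by (intro finite_set_of_finite_funs) (auto simp: finite_supp_def)
  ultimately show ?thesis
    by (rule finite_subset)
qed

lemma finite_supp_below: "finite_supp k \<Longrightarrow> i \<in> below k \<Longrightarrow> finite_supp i"
  unfolding finite_supp_def below_def
  by (rule finite_subset[of _ "{l. k l \<noteq> 0}"]) (auto simp: subset_iff, metis gr0I le_zero_eq)

lemma finite_supp_diff: "finite_supp k \<Longrightarrow> finite_supp (\<lambda>l. k l - i l)"
  unfolding finite_supp_def by (rule finite_subset[of _ "{l. k l \<noteq> 0}"]) auto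

lemma finite_supp_add: "finite_supp k \<Longrightarrow> finite_supp i \<Longrightarrow> finite_supp (\<lambda>l. k l + i l)"
  unfolding finite_supp_def by (rule finite_subset[of _ "{l. k l \<noteq> 0} \<union> {l. i l \<noteq> 0}"]) auto

lemma finite_supp_mult: "finite_supp j \<Longrightarrow> finite_supp (\<lambda>l. n * j l)"
  unfolding finite_supp_def by (rule finite_subset[of _ "{l. j l \<noteq> 0}"]) auto

lemma finite_supp_zero [simp]: "finite_supp (\<lambda>_. 0)"
  by (simp add: finite_supp_def)

lemma below_diff: "i \<in> below k \<Longrightarrow> (\<lambda>l. k l - i l) \<in> below k"
  by (simp add: below_def)

lemma finite_supp_trunc_idx: "k \<in> trunc_idx e N \<Longrightarrow> finite_supp k"
  unfolding finite_supp_def trunc_idx_def mindex_def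
  by (rule finite_subset[of _ "{..<e}"]) (auto, metis leI less_irrefl)

lemma trunc_idx_below: "k \<in> trunc_idx e N \<Longrightarrow> i \<in> below k \<Longrightarrow> i \<in> trunc_idx e N"
  unfolding trunc_idx_def mindex_def below_def by (auto intro: le_less_trans) (metis le_zero_eq)

lemma trunc_idx_mono: "N \<le> M \<Longrightarrow> trunc_idx e N \<subseteq> trunc_idx e M"
  unfolding trunc_idx_def by auto

lemma zero_in_trunc_idx: "N > 0 \<Longrightarrow> (\<lambda>_. 0) \<in> trunc_idx e N"
  by (simp add: trunc_idx_def mindex_def)


section \<open>Power series in countably many variables\<close>

text \<open>Exponent vectors are functions of finite support; coefficients at other functions are
  forced to be zero so that the Cauchy product below is a finite sum.\<close>

typedef (overloaded) 'a ps =
  "{f :: (nat \<Rightarrow> nat) \<Rightarrow> 'a::zero. \<forall>k. \<not> finite_supp k \<longrightarrow> f k = 0}"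
  morphisms ps_coeff Abs_ps
  by (rule exI[of _ "\<lambda>_. 0"]) auto

setup_lifting type_definition_ps

lemma ps_coeff_not_finite_supp: "\<not> finite_supp k \<Longrightarrow> ps_coeff x k = 0"
  using ps_coeff[of x] by auto

lemma ps_eqI: "(\<And>k. finite_supp k \<Longrightarrow> ps_coeff x k = ps_coeff y k) \<Longrightarrow> x = y"
  by (metis ps_coeff_inject ps_coeff_not_finite_supp ext)

definition cauchy_product ::
  "((nat \<Rightarrow> nat) \<Rightarrow> 'a::comm_ring_1) \<Rightarrow> ((nat \<Rightarrow> nat) \<Rightarrow> 'a) \<Rightarrow> (nat \<Rightarrow> nat) \<Rightarrow> 'a" where
  "cauchy_product f g k =
     (if finite_supp k then \<Sum>i\<in>below k. f i * g (\<lambda>l. k l - i l) else 0)"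

instantiation ps :: (comm_ring_1) comm_ring_1
begin

lift_definition zero_ps :: "'a ps" is "\<lambda>_. 0" by auto
lift_definition one_ps :: "'a ps" is "\<lambda>k. if k = (\<lambda>_. 0) then 1 else 0" by auto
lift_definition plus_ps :: "'a ps \<Rightarrow> 'a ps \<Rightarrow> 'a ps" is "\<lambda>f g k. f k + g k" by auto
lift_definition minus_ps :: "'a ps \<Rightarrow> 'a ps \<Rightarrow> 'a ps" is "\<lambda>f g k. f k - g k" by auto
lift_definition uminus_ps :: "'a ps \<Rightarrow> 'a ps" is "\<lambda>f k. - f k" by auto
lift_definition times_ps :: "'a ps \<Rightarrow> 'a ps \<Rightarrow> 'a ps" is cauchy_product
  by (auto simp: cauchy_product_def)

lemma ps_coeff_mult:
  "ps_coeff (x * y) k =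
     (if finite_supp k then \<Sum>i\<in>below k. ps_coeff x i * ps_coeff y (\<lambda>l. k l - i l) else 0)"
  by transfer (simp add: cauchy_product_def)

lemma ps_mult_assoc:
  fixes x y z :: "'a ps"
  shows "x * y * z = x * (y * z)"
proof (rule ps_eqI)
  fix k :: "nat \<Rightarrow> nat" assume k: "finite_supp k"
  have fin: "\<And>i. i \<in> below k \<Longrightarrow> finite_supp i"
    using k finite_supp_below by blast
  have "ps_coeff (x * y * z) k = (\<Sum>i\<in>below k. (\<Sum>j\<in>below i.
      ps_coeff x j * ps_coeff y (\<lambda>l. i l - j l)) * ps_coeff z (\<lambda>l. k l - i l))"
    using k fin by (simp add: ps_coeff_mult)
  also have "\<dots> = (\<Sum>(i, j)\<in>Sigma (below k) below.
      ps_coeff x j * ps_coeff y (\<lambda>l. i l - j l) * ps_coeff z (\<lambda>l. k l - i l))"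
    unfolding sum_distrib_right by (rule sum.Sigma) (auto simp: finite_below k fin)
  also have "\<dots> = (\<Sum>(j, t)\<in>Sigma (below k) (\<lambda>j. below (\<lambda>l. k l - j l)).
      ps_coeff x j * (ps_coeff y t * ps_coeff z (\<lambda>l. k l - j l - t l)))"
    by (rule sum.reindex_bij_witness[where i = "\<lambda>(j, t). (\<lambda>l. j l + t l, j)"
          and j = "\<lambda>(i, j). (j, \<lambda>l. i l - j l)"])
      (auto simp: below_def, metis le_trans, metis diff_le_mono, metis add.commute le_diff_conv2)
  also have "\<dots> = (\<Sum>j\<in>below k. ps_coeff x j * (\<Sum>t\<in>below (\<lambda>l. k l - j l).
      ps_coeff y t * ps_coeff z (\<lambda>l. k l - j l - t l)))"
    unfolding sum_distrib_left
    by (rule sum.Sigma[symmetric]) (auto simp: finite_below k finite_supp_diff)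
  also have "\<dots> = ps_coeff (x * (y * z)) k"
    using k by (simp add: ps_coeff_mult finite_supp_diff)
  finally show "ps_coeff (x * y * z) k = ps_coeff (x * (y * z)) k" .
qed

instance
proof
  fix a b c :: "'a ps"
  show "a * b * c = a * (b * c)"
    by (rule ps_mult_assoc)
  show "a * b = b * a"
  proof (rule ps_eqI)
    fix k :: "nat \<Rightarrow> nat" assume "finite_supp k"
    then show "ps_coeff (a * b) k = ps_coeff (b * a) k"
      unfolding ps_coeff_mult
      by simp (rule sum.reindex_bij_witness[where i = "\<lambda>i l. k l - i l" and j = "\<lambda>i l. k l - i l"],
          auto simp: below_def mult.commute)
  qed
  show "1 * a = a"
  proof (rule ps_eqI)
    fix k :: "nat \<Rightarrow> nat" assume k: "finite_supp k"
    have "ps_coeff (1 * a) k = (\<Sum>i\<in>below k. if i = (\<lambda>_. 0) then ps_coeff a k else 0)"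
      using k unfolding ps_coeff_mult by (auto intro!: sum.cong simp: one_ps.rep_eq)
    also have "\<dots> = ps_coeff a k"
      using finite_below[OF k] by (subst sum.delta) (auto simp: below_def)
    finally show "ps_coeff (1 * a) k = ps_coeff a k" .
  qed
  show "(a + b) * c = a * c + b * c"
    by (rule ps_eqI) (simp add: ps_coeff_mult plus_ps.rep_eq distrib_right sum.distrib)
  have "ps_coeff (0::'a ps) (\<lambda>_. 0) \<noteq> ps_coeff 1 (\<lambda>_. 0)"
    by (simp add: zero_ps.rep_eq one_ps.rep_eq)
  then show "(0::'a ps) \<noteq> 1"
    by metis
qed (transfer; force simp: algebra_simps)+

end

lemma ps_coeff_add [simp]: "ps_coeff (x + y) k = ps_coeff x k + ps_coeff y k"
  by transfer simp

lemma ps_coeff_diff [simp]: "ps_coeff (x - y) k = ps_coeff x k - ps_coeff y k"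
  by transfer simp

lemma ps_coeff_zero [simp]: "ps_coeff 0 k = 0"
  by transfer simp

lemma ps_coeff_one: "ps_coeff 1 k = (if k = (\<lambda>_. 0) then 1 else 0)"
  by transfer simp

lemma ps_coeff_sum: "ps_coeff (sum f A) k = (\<Sum>x\<in>A. ps_coeff (f x) k)"
  by (induction A rule: infinite_finite_induct) auto

lemma ps_coeff_of_nat: "ps_coeff (of_nat n :: 'a::comm_ring_1 ps) k = (if k = (\<lambda>_. 0) then of_nat n else 0)"
  by (induction n) (auto simp: ps_coeff_one)

lemma CHAR_ps [simp]: "CHAR('a::comm_ring_1 ps) = CHAR('a)"
proof (rule CHAR_eqI)
  show "of_nat CHAR('a) = (0::'a ps)"
    by (rule ps_eqI) (simp add: ps_coeff_of_nat)
  fix n assume "of_nat n = (0::'a ps)"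
  then have "ps_coeff (of_nat n :: 'a ps) (\<lambda>_. 0) = 0"
    by simp
  then show "CHAR('a) dvd n"
    by (simp add: ps_coeff_of_nat of_nat_eq_0_iff_char_dvd)
qed

lift_definition monom_ps :: "'a::zero \<Rightarrow> (nat \<Rightarrow> nat) \<Rightarrow> 'a ps" is
  "\<lambda>c j k. if finite_supp j \<and> k = j then c else 0" by auto

lemma ps_coeff_monom_ps: "ps_coeff (monom_ps c j) k = (if finite_supp j \<and> k = j then c else 0)"
  by transfer simp

lemma monom_ps_mult:
  fixes c :: "'a::comm_ring_1"
  assumes i: "finite_supp i" and j: "finite_supp j"
  shows "monom_ps c i * monom_ps d j = monom_ps (c * d) (\<lambda>l. i l + j l)"
proof (rule ps_eqI)
  fix k :: "nat \<Rightarrow> nat" assume k: "finite_supp k"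
  have "ps_coeff (monom_ps c i * monom_ps d j) k =
      (\<Sum>t\<in>below k. if t = i then (if (\<lambda>l. k l - t l) = j then c * d else 0) else 0)"
    unfolding ps_coeff_mult using k i j by (auto intro!: sum.cong simp: ps_coeff_monom_ps)
  also have "\<dots> = (if i \<in> below k \<and> (\<lambda>l. k l - i l) = j then c * d else 0)"
    using finite_below[OF k] by (subst sum.delta) auto
  also have "i \<in> below k \<and> (\<lambda>l. k l - i l) = j \<longleftrightarrow> k = (\<lambda>l. i l + j l)"
    by (auto simp: below_def fun_eq_iff) (metis add_diff_inverse_nat not_less le_add1)+
  finally show "ps_coeff (monom_ps c i * monom_ps d j) k = ps_coeff (monom_ps (c * d) (\<lambda>l. i l + j l)) k"
    using finite_supp_add[OF i j] by (auto simp: ps_coeff_monom_ps)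
qed

lemma monom_ps_power:
  fixes c :: "'a::comm_ring_1"
  assumes "finite_supp j"
  shows "monom_ps c j ^ n = monom_ps (c ^ n) (\<lambda>l. n * j l)"
proof (induction n)
  case 0
  show ?case
    by (rule ps_eqI) (auto simp: ps_coeff_monom_ps ps_coeff_one)
next
  case (Suc n)
  then show ?case
    using assms by (simp add: monom_ps_mult finite_supp_mult)
qed


section \<open>Congruence of power series on a set of exponents\<close>

definition agree_on :: "(nat \<Rightarrow> nat) set \<Rightarrow> 'a::zero ps \<Rightarrow> 'a ps \<Rightarrow> bool" where
  "agree_on S x y \<longleftrightarrow> (\<forall>k\<in>S. ps_coeff x k = ps_coeff y k)"

definition down_closed :: "(nat \<Rightarrow> nat) set \<Rightarrow> bool" where
  "down_closed S \<longleftrightarrow> (\<forall>k\<in>S. finite_supp k \<and> below k \<subseteq> S)"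

lemma agree_on_refl [simp]: "agree_on S x x"
  by (simp add: agree_on_def)

lemma agree_on_sym: "agree_on S x y \<Longrightarrow> agree_on S y x"
  by (simp add: agree_on_def)

lemma agree_on_trans [trans]: "agree_on S x y \<Longrightarrow> agree_on S y z \<Longrightarrow> agree_on S x z"
  by (simp add: agree_on_def)

lemma agree_on_subset: "agree_on S x y \<Longrightarrow> T \<subseteq> S \<Longrightarrow> agree_on T x y"
  by (auto simp: agree_on_def)

lemma agree_on_add: "agree_on S x x' \<Longrightarrow> agree_on S y y' \<Longrightarrow> agree_on S (x + y) (x' + y')"
  by (simp add: agree_on_def)

lemma agree_on_diff: "agree_on S x x' \<Longrightarrow> agree_on S y y' \<Longrightarrow> agree_on S (x - y) (x' - y')"
  by (simp add: agree_on_def)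

lemma agree_on_mult:
  fixes x :: "'a::comm_ring_1 ps"
  assumes S: "down_closed S" and "agree_on S x x'" "agree_on S y y'"
  shows "agree_on S (x * y) (x' * y')"
  unfolding agree_on_def
proof
  fix k assume k: "k \<in> S"
  then have "i \<in> S" "(\<lambda>l. k l - i l) \<in> S" if "i \<in> below k" for i
    using S that below_diff by (auto simp: down_closed_def)
  then show "ps_coeff (x * y) k = ps_coeff (x' * y') k"
    using assms(2,3) unfolding ps_coeff_mult agree_on_def by (auto intro!: sum.cong)
qed

lemma agree_on_power:
  fixes x :: "'a::comm_ring_1 ps"
  assumes "down_closed S" and "agree_on S x x'"
  shows "agree_on S (x ^ n) (x' ^ n)"
  by (induction n) (auto intro: agree_on_mult assms)

lemma agree_on_poly:
  fixes P Q :: "'a::comm_ring_1 ps poly"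
  assumes S: "down_closed S" and "\<And>i. agree_on S (coeff P i) (coeff Q i)"
  shows "agree_on S (poly P b) (poly Q b)"
  using assms(2)
proof (induction P Q rule: poly_induct2)
  case (pCons a P c Q)
  then have "agree_on S a c" "agree_on S (poly P b) (poly Q b)"
    by (metis coeff_pCons_0, metis coeff_pCons_Suc)
  then show ?case
    by (auto intro!: agree_on_add agree_on_mult[OF S])
qed simp

lemma down_closed_below: "finite_supp k \<Longrightarrow> down_closed (below k)"
  unfolding down_closed_def by (auto intro: finite_supp_below simp: below_def intro: le_trans)

lemma down_closed_trunc_idx: "down_closed (trunc_idx e N)"
  by (auto simp: down_closed_def intro: finite_supp_trunc_idx trunc_idx_below)

lemma ps_coeff_power_CHAR:
  fixes \<mu> :: "'a::comm_ring_1 ps"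
  assumes p: "prime CHAR('a)" and k: "finite_supp k"
  shows "ps_coeff (\<mu> ^ CHAR('a)) k =
    (\<Sum>j\<in>below k. if (\<lambda>l. CHAR('a) * j l) = k then ps_coeff \<mu> j ^ CHAR('a) else 0)"
proof -
  let ?p = "CHAR('a)" and ?m = "\<Sum>j\<in>below k. monom_ps (ps_coeff \<mu> j) j"
  have fin: "\<And>j. j \<in> below k \<Longrightarrow> finite_supp j"
    using k finite_supp_below by blast
  have "agree_on (below k) \<mu> ?m"
    unfolding agree_on_def
  proof
    fix i assume "i \<in> below k"
    have "ps_coeff ?m i = (\<Sum>j\<in>below k. if i = j then ps_coeff \<mu> j else 0)"
      unfolding ps_coeff_sum by (rule sum.cong) (auto simp: ps_coeff_monom_ps fin)
    also have "\<dots> = ps_coeff \<mu> i"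
      using finite_below[OF k] \<open>i \<in> below k\<close> by simp
    finally show "ps_coeff \<mu> i = ps_coeff ?m i" ..
  qed
  then have "agree_on (below k) (\<mu> ^ ?p) (?m ^ ?p)"
    by (rule agree_on_power[OF down_closed_below[OF k]])
  then have "ps_coeff (\<mu> ^ ?p) k = ps_coeff (?m ^ ?p) k"
    by (simp add: agree_on_def below_def)
  also have "?m ^ ?p = (\<Sum>j\<in>below k. monom_ps (ps_coeff \<mu> j ^ ?p) (\<lambda>l. ?p * j l))"
    using p by (simp add: freshmans_dream_sum monom_ps_power fin)
  also have "ps_coeff \<dots> k = (\<Sum>j\<in>below k. if (\<lambda>l. ?p * j l) = k then ps_coeff \<mu> j ^ ?p else 0)"
    unfolding ps_coeff_sum by (rule sum.cong) (auto simp: ps_coeff_monom_ps fin finite_supp_mult)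
  finally show ?thesis .
qed

lemma power_CHAR_diff:
  fixes x y :: "'a::comm_ring_1"
  assumes "prime CHAR('a)"
  shows "(x - y) ^ CHAR('a) = x ^ CHAR('a) - y ^ CHAR('a)"
  using freshmans_dream[OF assms refl, of "x - y" y] by (simp add: algebra_simps)

text \<open>Raising to the \<open>p\<close>-th power multiplies the precision of a truncated congruence by \<open>p\<close>:
  in \<open>(z - w)^p = \<Sum> c\<^sub>j\<^sup>p X\<^sup>p\<^sup>j\<close> only exponents \<open>j\<close> with some
  \<open>j\<^sub>l \<ge> N\<close> survive.\<close>

lemma agree_on_trunc_idx_power_CHAR:
  fixes z w :: "'a::comm_ring_1 ps"
  assumes p: "prime CHAR('a)" and zw: "agree_on (trunc_idx e N) z w"
  shows "agree_on (trunc_idx e (CHAR('a) * N)) (z ^ CHAR('a)) (w ^ CHAR('a))"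
proof -
  let ?p = "CHAR('a)"
  have "ps_coeff ((z - w) ^ ?p) k = 0" if k: "k \<in> trunc_idx e (?p * N)" for k
  proof -
    have "ps_coeff z j = ps_coeff w j" if j: "(\<lambda>l. ?p * j l) = k" for j
    proof -
      have "j \<in> trunc_idx e N"
        using k p j by (auto simp: trunc_idx_def mindex_def prime_gt_0_nat)
      then show ?thesis
        using zw by (simp add: agree_on_def)
    qed
    then show ?thesis
      unfolding ps_coeff_power_CHAR[OF p finite_supp_trunc_idx[OF k]]
      using p by (auto intro!: sum.neutral simp: prime_gt_0_nat power_0_left)
  qed
  moreover have "(z - w) ^ ?p = z ^ ?p - w ^ ?p"
    using power_CHAR_diff[where 'a = "'a ps"] p by simp
  ultimately show ?thesis
    by (simp add: agree_on_def)
qed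


section \<open>Elements outside a subring containing all \<open>p\<close>-th powers\<close>

definition is_subring :: "'a::comm_ring_1 set \<Rightarrow> bool" where
  "is_subring L \<longleftrightarrow> 1 \<in> L \<and> (\<forall>x\<in>L. \<forall>y\<in>L. x + y \<in> L \<and> x - y \<in> L \<and> x * y \<in> L)"

lemma subring_one: "is_subring L \<Longrightarrow> 1 \<in> L"
  and subring_add: "is_subring L \<Longrightarrow> x \<in> L \<Longrightarrow> y \<in> L \<Longrightarrow> x + y \<in> L"
  and subring_diff: "is_subring L \<Longrightarrow> x \<in> L \<Longrightarrow> y \<in> L \<Longrightarrow> x - y \<in> L"
  and subring_mult: "is_subring L \<Longrightarrow> x \<in> L \<Longrightarrow> y \<in> L \<Longrightarrow> x * y \<in> L"
  by (simp_all add: is_subring_def)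

lemma subring_zero: "is_subring L \<Longrightarrow> 0 \<in> L"
  using subring_diff[OF _ subring_one subring_one] by fastforce

lemma subring_uminus: "is_subring L \<Longrightarrow> x \<in> L \<Longrightarrow> - x \<in> L"
  using subring_diff[OF _ subring_zero] by fastforce

lemma subring_power: "is_subring L \<Longrightarrow> x \<in> L \<Longrightarrow> x ^ n \<in> L"
  by (induction n) (auto intro: subring_one subring_mult)

lemma subring_sum: "is_subring L \<Longrightarrow> (\<And>i. i \<in> A \<Longrightarrow> f i \<in> L) \<Longrightarrow> sum f A \<in> L"
  by (induction A rule: infinite_finite_induct) (auto intro: subring_zero subring_add)

lemma subring_of_nat: "is_subring L \<Longrightarrow> of_nat n \<in> L"
  by (induction n) (auto intro: subring_zero subring_add subring_one)

text \<open>\<open>x\<^sup>-\<^sup>1 = x\<^sup>p\<^sup>-\<^sup>1 (x\<^sup>-\<^sup>1)\<^sup>p\<close>, so such a subring is a subfield.\<close>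

lemma subring_inverse:
  fixes x :: "'a::field"
  assumes L: "is_subring L" "range (\<lambda>y. y ^ CHAR('a)) \<subseteq> L" and "CHAR('a) > 0" and x: "x \<in> L"
  shows "inverse x \<in> L"
proof (cases "x = 0")
  case False
  have "inverse x = x ^ (CHAR('a) - 1) * inverse x ^ CHAR('a)"
    using False \<open>CHAR('a) > 0\<close> by (cases "CHAR('a)") (auto simp: field_simps)
  moreover have "inverse x ^ CHAR('a) \<in> L"
    using L(2) by auto
  ultimately show ?thesis
    by (metis subring_mult[OF L(1)] subring_power[OF L(1) x])
qed (use subring_zero[OF L(1)] in simp)

definition poly_over :: "'a::comm_ring_1 set \<Rightarrow> 'a poly \<Rightarrow> bool" where
  "poly_over L f \<longleftrightarrow> (\<forall>i. coeff f i \<in> L)"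

lemma poly_over_add: "is_subring L \<Longrightarrow> poly_over L f \<Longrightarrow> poly_over L g \<Longrightarrow> poly_over L (f + g)"
  and poly_over_diff: "is_subring L \<Longrightarrow> poly_over L f \<Longrightarrow> poly_over L g \<Longrightarrow> poly_over L (f - g)"
  and poly_over_smult: "is_subring L \<Longrightarrow> c \<in> L \<Longrightarrow> poly_over L g \<Longrightarrow> poly_over L (smult c g)"
  and poly_over_monom: "is_subring L \<Longrightarrow> c \<in> L \<Longrightarrow> poly_over L (monom c n)"
  and poly_over_zero: "is_subring L \<Longrightarrow> poly_over L 0"
  by (simp_all add: poly_over_def subring_add subring_diff subring_mult coeff_monom subring_zero)

lemma poly_over_mult: "is_subring L \<Longrightarrow> poly_over L f \<Longrightarrow> poly_over L g \<Longrightarrow> poly_over L (f * g)"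
  by (auto simp: poly_over_def coeff_mult intro!: subring_sum subring_mult)

lemma poly_over_const: "is_subring L \<Longrightarrow> c \<in> L \<Longrightarrow> poly_over L [:c:]"
  by (simp add: poly_over_def coeff_pCons subring_zero split: nat.split)

lemma poly_over_pCons: "poly_over L (pCons c f) \<longleftrightarrow> c \<in> L \<and> poly_over L f"
  by (auto simp: poly_over_def coeff_pCons split: nat.split)

lemma poly_over_divmod_monic:
  fixes f m :: "'a::comm_ring_1 poly"
  assumes L: "is_subring L" and m: "lead_coeff m = 1" "poly_over L m" and f: "poly_over L f"
  obtains q r where "poly_over L q" "poly_over L r" "f = m * q + r" "r = 0 \<or> degree r < degree m"
  using f
proof (induction "degree f" arbitrary: f thesis rule: less_induct)
  case less
  show ?case
  proof (cases "f = 0 \<or> degree f < degree m")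
    case True
    then show ?thesis
      using less.prems by (intro less.prems(1)[of 0 f]) (auto simp: poly_over_zero[OF L])
  next
    case False
    let ?c = "lead_coeff f" and ?s = "degree f - degree m"
    define f' where "f' = f - monom ?c ?s * m"
    have cL: "?c \<in> L"
      using less.prems(2) by (simp add: poly_over_def)
    have f'L: "poly_over L f'"
      unfolding f'_def by (intro poly_over_diff poly_over_mult poly_over_monom L m cL less.prems(2))
    have "coeff f' i = 0" if "i \<ge> degree f" for i
      using False that m(1) by (cases "i = degree f") (auto simp: f'_def coeff_monom_mult coeff_eq_0)
    then have "f' = 0 \<or> degree f' < degree f"
      using False by (metis leading_coeff_0_iff le_less_linear)
    then show ?thesis
    proof
      assume "f' = 0"
      then show ?thesis
        using L cL by (intro less.prems(1)[of "monom ?c ?s" 0])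
          (auto simp: f'_def poly_over_zero poly_over_monom mult.commute)
    next
      assume "degree f' < degree f"
      then obtain q r where "poly_over L q" "poly_over L r" "f' = m * q + r" "r = 0 \<or> degree r < degree m"
        using less.hyps f'L by metis
      then show ?thesis
        using L cL by (intro less.prems(1)[of "monom ?c ?s + q" r])
          (auto simp: f'_def poly_over_add poly_over_monom algebra_simps)
    qed
  qed
qed

lemma coeff_linear_power_pred:
  fixes b :: "'a::comm_ring_1"
  shows "coeff ([:b, 1:] ^ Suc n) n = of_nat (Suc n) * b"
proof (induction n)
  case (Suc n)
  have "[:b, 1:] ^ Suc (Suc n) = smult b ([:b, 1:] ^ Suc n) + pCons 0 ([:b, 1:] ^ Suc n)"
    by (simp del: power_Suc add: power_Suc[of _ "Suc n"])
  then show ?case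
    using coeff_linear_power[of b "Suc n"] Suc by (simp add: algebra_simps)
qed simp

lemma linear_power_CHAR:
  fixes a :: "'a::comm_ring_1"
  assumes "prime CHAR('a)"
  shows "[:- a, 1:] ^ CHAR('a) = monom 1 CHAR('a) - [:a ^ CHAR('a):]"
proof -
  have "[:- a, 1:] = monom 1 1 + [:- a:]"
    by (simp add: monom_altdef)
  then have "[:- a, 1:] ^ CHAR('a) = monom 1 1 ^ CHAR('a) + [:- a:] ^ CHAR('a)"
    using freshmans_dream[where 'a = "'a poly" and x = "monom 1 1" and y = "[:- a:]"] assms by simp
  also have "\<dots> = monom 1 CHAR('a) + [:(- a) ^ CHAR('a):]"
    by (simp add: monom_altdef poly_const_pow flip: power_mult)
  finally show ?thesis
    using minus_power_prime_CHAR[OF refl assms] by simp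
qed

lemma prime_elem_dvd_power_imp_unit:
  fixes q s :: "'a::{algebraic_semidom, idom}"
  assumes q: "prime_elem q" and "s dvd q ^ n" and "\<not> q dvd s"
  shows "is_unit s"
  using assms(2)
proof (induction n)
  case (Suc n)
  then obtain w where w: "q * q ^ n = s * w"
    by (auto elim: dvdE)
  then have "q dvd w"
    using assms(3) prime_elem_dvd_mult_iff[OF q] by (metis dvd_triv_left)
  then obtain w' where "w = q * w'"
    by (elim dvdE)
  then have "q ^ n = s * w'"
    using w q by (simp add: algebra_simps prime_elem_def)
  then show ?case
    using Suc.IH by simp
qed simp

lemma monic_dvd_linear_power:
  fixes r :: "'a::field poly"
  assumes monic: "lead_coeff r = 1" and dvd: "r dvd [:- a, 1:] ^ n"
  shows "r = [:- a, 1:] ^ degree r"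
proof -
  have "r \<noteq> 0"
    using monic by auto
  then obtain k s where r: "r = [:- a, 1:] ^ k * s" and s: "\<not> [:- a, 1:] dvd s"
    using order_decomp by blast
  have "prime_elem [:- a, 1::'a:]"
    by (rule prime_elem_linear_field_poly) simp
  moreover have "s dvd [:- a, 1:] ^ n"
    using dvd unfolding r by (rule dvd_mult_right)
  ultimately have "is_unit s"
    using s by (rule prime_elem_dvd_power_imp_unit)
  moreover have "s \<noteq> 0"
    using \<open>r \<noteq> 0\<close> unfolding r by (rule contrapos_nn) simp
  ultimately have "degree s = 0"
    by (simp add: is_unit_iff_degree)
  moreover have "lead_coeff s = 1"
    using monic unfolding r by (simp add: lead_coeff_mult lead_coeff_power)
  ultimately have "s = 1"
    by (metis degree_0_id one_pCons)
  then show ?thesis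
    using r by (simp add: degree_linear_power)
qed

lemma poly_over_minimal_monic:
  fixes a :: "'a::field"
  assumes L: "is_subring L" "\<And>x. x \<in> L \<Longrightarrow> inverse x \<in> L"
    and t: "poly_over L t" "t \<noteq> 0" "poly t a = 0"
  obtains r where "lead_coeff r = 1" "poly_over L r" "poly r a = 0"
    "\<And>s. poly_over L s \<Longrightarrow> s \<noteq> 0 \<Longrightarrow> poly s a = 0 \<Longrightarrow> degree r \<le> degree s"
proof -
  let ?P = "\<lambda>r. r \<noteq> 0 \<and> poly_over L r \<and> poly r a = 0"
  define d where "d = (LEAST n. \<exists>r. ?P r \<and> degree r = n)"
  obtain r0 where r0: "?P r0" "degree r0 = d"
    using LeastI_ex[of "\<lambda>n. \<exists>r. ?P r \<and> degree r = n"] t unfolding d_def by blast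
  have min: "d \<le> degree s" if "?P s" for s
    unfolding d_def using that by (intro Least_le) blast
  have "lead_coeff r0 \<in> L"
    using r0 by (simp add: poly_over_def)
  then have "poly_over L (smult (inverse (lead_coeff r0)) r0)"
    using r0 by (intro poly_over_smult L) auto
  then show ?thesis
    using r0 min by (intro that[of "smult (inverse (lead_coeff r0)) r0"]) auto
qed

lemma minimal_root_poly_eq_linear_power:
  fixes a :: "'a::field"
  assumes p: "prime CHAR('a)" and L: "is_subring L" "range (\<lambda>x. x ^ CHAR('a)) \<subseteq> L"
    and r: "lead_coeff r = 1" "poly_over L r" "poly r a = 0"
    and min: "\<And>s. poly_over L s \<Longrightarrow> s \<noteq> 0 \<Longrightarrow> poly s a = 0 \<Longrightarrow> degree r \<le> degree s"
  shows "r = [:- a, 1:] ^ degree r"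
proof -
  let ?p = "CHAR('a)"
  have "poly_over L (monom 1 ?p - [:a ^ ?p:])"
    using L by (intro poly_over_diff poly_over_monom poly_over_const subring_one) auto
  then obtain q s where qs: "poly_over L s" "monom 1 ?p - [:a ^ ?p:] = r * q + s"
    "s = 0 \<or> degree s < degree r"
    using poly_over_divmod_monic[OF L(1) r(1,2)] by metis
  have "poly (monom 1 ?p - [:a ^ ?p:]) a = 0"
    by (simp add: poly_monom)
  then have "poly s a = 0"
    using r(3) by (simp add: qs(2))
  then have "s = 0"
    using min[OF qs(1)] qs(3) by fastforce
  then show ?thesis
    using qs(2) by (intro monic_dvd_linear_power[OF r(1), of _ ?p]) (simp add: linear_power_CHAR[OF p])
qed

text \<open>If \<open>a \<notin> L\<close>, the minimal polynomial \<open>r\<close> of \<open>a\<close> over \<open>L\<close> divides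
  \<open>X\<^sup>p - a\<^sup>p = (X - a)\<^sup>p\<close>, hence \<open>r = (X - a)\<^sup>d\<close>; for \<open>0 < d < p\<close> its
  coefficient \<open>-d a\<close> would put \<open>a\<close> into \<open>L\<close>. So \<open>1, a, \<dots>, a\<^sup>p\<^sup>-\<^sup>1\<close>
  are linearly independent over \<open>L\<close>.\<close>

lemma poly_over_root_degree_ge_CHAR:
  fixes a :: "'a::field"
  assumes p: "CHAR('a) > 0" and L: "is_subring L" "range (\<lambda>x. x ^ CHAR('a)) \<subseteq> L"
    and a: "a \<notin> L" and t: "poly_over L t" "t \<noteq> 0" "poly t a = 0"
  shows "CHAR('a) \<le> degree t"
proof (rule ccontr)
  assume small: "\<not> ?thesis"
  have inv: "\<And>x. x \<in> L \<Longrightarrow> inverse x \<in> L"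
    using subring_inverse[OF L p] .
  obtain r where r: "lead_coeff r = 1" "poly_over L r" "poly r a = 0"
    and min: "\<And>s. poly_over L s \<Longrightarrow> s \<noteq> 0 \<Longrightarrow> poly s a = 0 \<Longrightarrow> degree r \<le> degree s"
    using poly_over_minimal_monic[OF L(1) inv t] by blast
  have r_eq: "r = [:- a, 1:] ^ degree r"
    using minimal_root_poly_eq_linear_power[OF prime_CHAR_semidom[OF p] L r min] by blast
  have "degree r \<noteq> 0"
    using r(3) r_eq by (metis one_neq_zero poly_1 power_0)
  then obtain d where d: "degree r = Suc d"
    using not0_implies_Suc by blast
  have "\<not> CHAR('a) dvd Suc d"
    using min[OF t] d small by (auto dest: dvd_imp_le)
  then have "of_nat (Suc d) \<noteq> (0::'a)"
    unfolding of_nat_eq_0_iff_char_dvd .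
  have "coeff r d = of_nat (Suc d) * - a"
    using r_eq d coeff_linear_power_pred[of "- a" d] by metis
  then have "of_nat (Suc d) * - a \<in> L"
    using r(2) by (metis poly_over_def)
  then have "- inverse (of_nat (Suc d)) * (of_nat (Suc d) * - a) \<in> L"
    by (rule subring_mult[OF L(1) subring_uminus[OF L(1) inv[OF subring_of_nat[OF L(1)]]]])
  also have "- inverse (of_nat (Suc d)) * (of_nat (Suc d) * - a) = a"
    using \<open>of_nat (Suc d) \<noteq> (0::'a)\<close> by (simp only: mult.assoc[symmetric] left_inverse) simp
  finally show False
    using a by contradiction
qed

lemma poly_over_root_dvd:
  fixes a :: "'a::field"
  assumes p: "CHAR('a) > 0" and L: "is_subring L" "range (\<lambda>x. x ^ CHAR('a)) \<subseteq> L"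
    and a: "a \<notin> L" and f: "poly_over L f" "poly f a = 0"
  obtains q where "poly_over L q" "f = (monom 1 CHAR('a) - [:a ^ CHAR('a):]) * q"
proof -
  let ?p = "CHAR('a)" and ?g = "monom 1 CHAR('a) - [:a ^ CHAR('a):]"
  have "?g = monom 1 ?p + [:- (a ^ ?p):]"
    by simp
  then have deg: "degree ?g = ?p"
    using p by (metis degree_add_eq_left degree_monom_eq degree_pCons_0 one_neq_zero)
  then have "lead_coeff ?g = 1"
    using p by (cases ?p) auto
  moreover have "poly_over L ?g"
    using L by (intro poly_over_diff poly_over_monom poly_over_const subring_one) auto
  ultimately obtain q r where qr: "poly_over L q" "poly_over L r" "f = ?g * q + r"
    "r = 0 \<or> degree r < ?p"
    using poly_over_divmod_monic[OF L(1) _ _ f(1)] deg by metis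
  have "poly ?g a = 0"
    by (simp add: poly_monom)
  then have "poly r a = 0"
    using f(2) by (simp add: qr(3))
  then have "r = 0"
    using poly_over_root_degree_ge_CHAR[OF p L a qr(2)] qr(4) by fastforce
  then show ?thesis
    using qr that by simp
qed


section \<open>Lifting a ring homomorphism to a higher truncation\<close>

text \<open>The parameter \<open>p\<close> is \<open>CHAR('a)\<close>; it is a parameter only so that the abbreviation
  \<open>T'\<close> below can mention it.\<close>

locale hom_mod_trunc =
  fixes e N p :: nat and \<phi> :: "'a::field \<Rightarrow> 'a ps"
  assumes p: "p = CHAR('a)" and CHAR_pos: "CHAR('a) > 0"
    and hom_add: "agree_on (trunc_idx e N) (\<phi> (x + y)) (\<phi> x + \<phi> y)"
    and hom_mult: "agree_on (trunc_idx e N) (\<phi> (x * y)) (\<phi> x * \<phi> y)"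
    and hom_one: "agree_on (trunc_idx e N) (\<phi> 1) 1"
begin

abbreviation "T \<equiv> trunc_idx e N"
abbreviation "T' \<equiv> trunc_idx e (p * N)"

lemma prime_p: "prime p"
  using prime_CHAR_semidom[OF CHAR_pos] p by simp

lemma T_subset_T': "T \<subseteq> T'"
  using CHAR_pos p by (intro trunc_idx_mono) simp

lemma hom_zero: "agree_on T (\<phi> 0) 0"
proof -
  have "ps_coeff (\<phi> 0) k = 0" if "k \<in> T" for k
    using hom_add[of 0 0] that unfolding agree_on_def by (metis add_0 ps_coeff_add add_cancel_right_right)
  then show ?thesis
    by (simp add: agree_on_def)
qed

lemma hom_diff: "agree_on T (\<phi> (x - y)) (\<phi> x - \<phi> y)"
  using hom_add[of "x - y" y] by (simp add: agree_on_def eq_diff_eq)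

lemma agree_on_power_p:
  fixes z w :: "'a ps"
  assumes "agree_on T z w"
  shows "agree_on T' (z ^ p) (w ^ p)"
  using agree_on_trunc_idx_power_CHAR[OF _ assms] prime_p unfolding p by blast

text \<open>A partial lift is the graph of a map from a subring of the field to power series
  modulo \<open>T'\<close>, each fibre being one congruence class.\<close>

definition partial_lift :: "('a \<times> 'a ps) set \<Rightarrow> bool" where
  "partial_lift G \<longleftrightarrow>
     (\<forall>x u v. (x, u) \<in> G \<longrightarrow> ((x, v) \<in> G \<longleftrightarrow> agree_on T' u v)) \<and>
     (\<forall>x u y v. (x, u) \<in> G \<longrightarrow> (y, v) \<in> G \<longrightarrow>
        (x + y, u + v) \<in> G \<and> (x - y, u - v) \<in> G \<and> (x * y, u * v) \<in> G) \<and>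
     (\<forall>x u. (x, u) \<in> G \<longrightarrow> agree_on T u (\<phi> x)) \<and>
     (\<forall>x. (x ^ p, \<phi> x ^ p) \<in> G)"

lemma partial_lift_Union_chain:
  assumes C: "C \<in> chains {G. partial_lift G}" and "C \<noteq> {}"
  shows "partial_lift (\<Union>C)"
proof -
  have lift: "\<And>G. G \<in> C \<Longrightarrow> partial_lift G"
    using C by (auto simp: chains_def)
  have common: "\<exists>G\<in>C. z \<in> G \<and> z' \<in> G" if "z \<in> \<Union>C" "z' \<in> \<Union>C" for z z'
  proof -
    from that obtain A B where "A \<in> C" "B \<in> C" "z \<in> A" "z' \<in> B"
      by auto
    then show ?thesis
      using C unfolding chains_def chain_subset_def by blast
  qed
  obtain G0 where "G0 \<in> C"
    using \<open>C \<noteq> {}\<close> by blast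
  show ?thesis
    unfolding partial_lift_def
  proof (intro conjI allI impI)
    fix x u v assume "(x, u) \<in> \<Union>C"
    then obtain G where G: "G \<in> C" "(x, u) \<in> G"
      by blast
    show "(x, v) \<in> \<Union>C \<longleftrightarrow> agree_on T' u v"
    proof
      assume "(x, v) \<in> \<Union>C"
      then obtain H where "H \<in> C" "(x, u) \<in> H" "(x, v) \<in> H"
        using common[of "(x, u)" "(x, v)"] G by blast
      then show "agree_on T' u v"
        using lift unfolding partial_lift_def by blast
    next
      assume "agree_on T' u v"
      then show "(x, v) \<in> \<Union>C"
        using G lift unfolding partial_lift_def by blast
    qed
  next
    fix x u y v assume "(x, u) \<in> \<Union>C" "(y, v) \<in> \<Union>C"
    then obtain G where "G \<in> C" "(x, u) \<in> G" "(y, v) \<in> G"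
      using common by blast
    then show "(x + y, u + v) \<in> \<Union>C" "(x - y, u - v) \<in> \<Union>C" "(x * y, u * v) \<in> \<Union>C"
      using lift unfolding partial_lift_def by blast+
  next
    fix x u assume "(x, u) \<in> \<Union>C"
    then show "agree_on T u (\<phi> x)"
      using lift unfolding partial_lift_def by blast
  next
    fix x
    show "(x ^ p, \<phi> x ^ p) \<in> \<Union>C"
      using \<open>G0 \<in> C\<close> lift unfolding partial_lift_def by blast
  qed
qed

end

locale partial_lift_extension = hom_mod_trunc +
  fixes M :: "('a \<times> 'a ps) set" and a :: 'a
  assumes M: "partial_lift M" and a_notin: "a \<notin> Domain M"
begin

abbreviation "L \<equiv> Domain M"

lemma M_fibre: "(x, u) \<in> M \<Longrightarrow> (x, v) \<in> M \<longleftrightarrow> agree_on T' u v"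
  and M_closed: "(x, u) \<in> M \<Longrightarrow> (y, v) \<in> M \<Longrightarrow>
     (x + y, u + v) \<in> M \<and> (x - y, u - v) \<in> M \<and> (x * y, u * v) \<in> M"
  and M_hom: "(x, u) \<in> M \<Longrightarrow> agree_on T u (\<phi> x)"
  and M_power: "(x ^ p, \<phi> x ^ p) \<in> M"
  using M unfolding partial_lift_def by blast+

lemma zero_zero_in_M: "(0, 0) \<in> M"
proof -
  have "(0 ^ p, 0 ^ p) \<in> M"
    using M_fibre[OF M_power] agree_on_power_p[OF hom_zero] by blast
  then show ?thesis
    using prime_gt_0_nat[OF prime_p] by (simp add: power_0_left)
qed

text \<open>Forcing \<open>g 0 = 0\<close> makes \<open>map_poly g\<close> act coefficientwise.\<close>

definition g :: "'a \<Rightarrow> 'a ps" where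
  "g x = (if x = 0 then 0 else SOME u. (x, u) \<in> M)"

lemma g_zero [simp]: "g 0 = 0"
  by (simp add: g_def)

lemma g_in_M: "x \<in> L \<Longrightarrow> (x, g x) \<in> M"
  using zero_zero_in_M by (auto simp: g_def intro: someI)

lemma in_M_iff: "x \<in> L \<Longrightarrow> (x, u) \<in> M \<longleftrightarrow> agree_on T' (g x) u"
  using M_fibre[OF g_in_M] .

lemma subring_L: "is_subring L"
  unfolding is_subring_def
proof (intro conjI ballI)
  show "1 \<in> L"
    using M_power[of 1] by force
  fix x y assume "x \<in> L" "y \<in> L"
  then obtain u v where "(x, u) \<in> M" "(y, v) \<in> M"
    by blast
  from M_closed[OF this] show "x + y \<in> L" "x - y \<in> L" "x * y \<in> L"
    by blast+
qed

lemma pth_powers_L: "range (\<lambda>x. x ^ CHAR('a)) \<subseteq> L"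
  using M_power p by blast

lemma g_add: "x \<in> L \<Longrightarrow> y \<in> L \<Longrightarrow> agree_on T' (g (x + y)) (g x + g y)"
  and g_diff: "x \<in> L \<Longrightarrow> y \<in> L \<Longrightarrow> agree_on T' (g (x - y)) (g x - g y)"
  and g_mult: "x \<in> L \<Longrightarrow> y \<in> L \<Longrightarrow> agree_on T' (g (x * y)) (g x * g y)"
  using M_closed[OF g_in_M g_in_M] in_M_iff subring_L
  by (meson subring_add subring_diff subring_mult)+

lemma g_hom: "x \<in> L \<Longrightarrow> agree_on T (g x) (\<phi> x)"
  using M_hom[OF g_in_M] .

lemma g_power: "agree_on T' (g (x ^ p)) (\<phi> x ^ p)"
  using M_power in_M_iff by blast

lemma g_one: "agree_on T' (g 1) 1"
proof -
  have "agree_on T' (g (1 ^ p)) (\<phi> 1 ^ p)"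
    by (rule g_power)
  also have "agree_on T' (\<phi> 1 ^ p) (1 ^ p)"
    by (rule agree_on_power_p[OF hom_one])
  finally show ?thesis
    by simp
qed

definition G :: "'a poly \<Rightarrow> 'a ps" where
  "G f = poly (map_poly g f) (\<phi> a)"

lemma G_pCons: "G (pCons c f) = g c + \<phi> a * G f"
  by (simp add: G_def map_poly_pCons)

lemma G_const: "G [:c:] = g c"
  using G_pCons[of c 0] by (simp add: G_def)

lemma agree_on_G:
  assumes "\<And>i. agree_on T' (g (coeff f i)) (coeff P i)"
  shows "agree_on T' (G f) (poly P (\<phi> a))"
  unfolding G_def using assms by (intro agree_on_poly down_closed_trunc_idx) (simp add: coeff_map_poly)

lemma G_add:
  assumes "poly_over L f" "poly_over L h"
  shows "agree_on T' (G (f + h)) (G f + G h)"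
proof -
  have "G f + G h = poly (map_poly g f + map_poly g h) (\<phi> a)"
    by (simp add: G_def)
  show ?thesis
    unfolding \<open>G f + G h = _\<close>
    by (rule agree_on_G) (use assms in \<open>simp add: coeff_map_poly poly_over_def g_add\<close>)
qed

lemma G_diff:
  assumes "poly_over L f" "poly_over L h"
  shows "agree_on T' (G (f - h)) (G f - G h)"
proof -
  have "G f - G h = poly (map_poly g f - map_poly g h) (\<phi> a)"
    by (simp add: G_def)
  show ?thesis
    unfolding \<open>G f - G h = _\<close>
    by (rule agree_on_G) (use assms in \<open>simp add: coeff_map_poly poly_over_def g_diff\<close>)
qed

lemma G_smult:
  assumes "c \<in> L" "poly_over L h"
  shows "agree_on T' (G (smult c h)) (g c * G h)"
proof -
  have "g c * G h = poly (smult (g c) (map_poly g h)) (\<phi> a)"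
    by (simp add: G_def)
  show ?thesis
    unfolding \<open>g c * G h = _\<close>
    by (rule agree_on_G) (use assms in \<open>simp add: coeff_map_poly poly_over_def g_mult\<close>)
qed

lemma G_mult:
  assumes "poly_over L f" "poly_over L h"
  shows "agree_on T' (G (f * h)) (G f * G h)"
  using assms(1)
proof (induction f)
  case (pCons c f)
  have c: "c \<in> L" and f: "poly_over L f"
    using pCons.prems by (simp_all add: poly_over_pCons)
  have fh: "poly_over L (pCons 0 (f * h))"
    using f assms(2) subring_L by (simp add: poly_over_pCons subring_zero poly_over_mult)
  have "agree_on T' (G (pCons c f * h)) (G (smult c h) + G (pCons 0 (f * h)))"
    unfolding mult_pCons_left using G_add[OF poly_over_smult[OF subring_L c assms(2)] fh] .
  also have "agree_on T' \<dots> (g c * G h + \<phi> a * (G f * G h))"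
    unfolding G_pCons g_zero add_0
    by (intro agree_on_add agree_on_mult[OF down_closed_trunc_idx] G_smult c assms(2) pCons.IH f)
      simp
  also have "g c * G h + \<phi> a * (G f * G h) = G (pCons c f) * G h"
    by (simp add: G_pCons algebra_simps)
  finally show ?case .
qed (simp add: G_def)

lemma G_annihilator: "agree_on T' (G (monom 1 p - [:a ^ p:])) 0"
proof -
  have "a ^ p \<in> L"
    using pth_powers_L p by blast
  then have "agree_on T' (G (monom 1 p - [:a ^ p:])) (G (monom 1 p) - G [:a ^ p:])"
    using subring_L by (intro G_diff poly_over_monom poly_over_const subring_one)
  also have "G (monom 1 p) - G [:a ^ p:] = g 1 * \<phi> a ^ p - g (a ^ p)"
    by (simp add: G_def map_poly_monom poly_monom G_const[unfolded G_def])
  also have "agree_on T' \<dots> (1 * \<phi> a ^ p - \<phi> a ^ p)"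
    by (intro agree_on_diff agree_on_mult[OF down_closed_trunc_idx] g_one g_power agree_on_refl)
  finally show ?thesis
    by simp
qed

lemma G_root:
  assumes "poly_over L f" "poly f a = 0"
  shows "agree_on T' (G f) 0"
proof -
  obtain q where q: "poly_over L q" "f = (monom 1 p - [:a ^ p:]) * q"
    using poly_over_root_dvd[OF CHAR_pos subring_L pth_powers_L a_notin assms] p by blast
  have "poly_over L (monom 1 p - [:a ^ p:])"
    using pth_powers_L p subring_L by (intro poly_over_diff poly_over_monom poly_over_const subring_one) auto
  then have "agree_on T' (G f) (G (monom 1 p - [:a ^ p:]) * G q)"
    unfolding q(2) using q(1) by (rule G_mult)
  also have "agree_on T' \<dots> (0 * G q)"
    by (intro agree_on_mult[OF down_closed_trunc_idx] G_annihilator agree_on_refl)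
  finally show ?thesis
    by simp
qed

lemma G_cong:
  assumes "poly_over L f" "poly_over L h" "poly f a = poly h a"
  shows "agree_on T' (G f) (G h)"
proof -
  have "agree_on T' (G (f - h)) 0"
    using assms subring_L by (intro G_root poly_over_diff) auto
  then show ?thesis
    using G_diff[OF assms(1,2)] by (simp add: agree_on_def)
qed

lemma G_hom: "poly_over L f \<Longrightarrow> agree_on T (G f) (\<phi> (poly f a))"
proof (induction f)
  case 0
  show ?case
    using agree_on_sym[OF hom_zero] by (simp add: G_def)
next
  case (pCons c f)
  then have "c \<in> L" "poly_over L f"
    by (simp_all add: poly_over_pCons)
  then have "agree_on T (G (pCons c f)) (\<phi> c + \<phi> a * \<phi> (poly f a))"
    unfolding G_pCons by (intro agree_on_add agree_on_mult[OF down_closed_trunc_idx] g_hom pCons.IH) simp_all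
  also have "agree_on T \<dots> (\<phi> c + \<phi> (a * poly f a))"
    by (intro agree_on_add agree_on_refl agree_on_sym[OF hom_mult])
  also have "agree_on T \<dots> (\<phi> (poly (pCons c f) a))"
    using agree_on_sym[OF hom_add] by simp
  finally show ?case .
qed

definition M' :: "('a \<times> 'a ps) set" where
  "M' = {(poly f a, u) | f u. poly_over L f \<and> agree_on T' (G f) u}"

lemma M_subset_M': "M \<subseteq> M'"
proof
  fix z assume "z \<in> M"
  then obtain x u where z: "z = (x, u)" "(x, u) \<in> M"
    by (cases z) auto
  then have "x \<in> L"
    by blast
  then have "poly_over L [:x:]" "agree_on T' (G [:x:]) u"
    using z(2) in_M_iff subring_L by (auto simp: G_const poly_over_const)
  then show "z \<in> M'"
    unfolding M'_def z(1) by (intro CollectI exI[of _ "[:x:]"]) auto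
qed

lemma a_in_Domain_M': "a \<in> Domain M'"
proof -
  have "poly_over L [:0, 1:]"
    using subring_L by (simp add: poly_over_pCons poly_over_zero subring_zero subring_one)
  then have "(poly [:0, 1:] a, G [:0, 1:]) \<in> M'"
    unfolding M'_def by (intro CollectI exI[of _ "[:0, 1:]"] exI[of _ "G [:0, 1:]"]) simp
  then show ?thesis
    by (auto intro: DomainI)
qed

lemma M'_closed:
  assumes "(x, u) \<in> M'" "(y, v) \<in> M'"
  shows "(x + y, u + v) \<in> M'" "(x - y, u - v) \<in> M'" "(x * y, u * v) \<in> M'"
proof -
  obtain f h where f: "poly_over L f" "x = poly f a" "agree_on T' (G f) u"
    and h: "poly_over L h" "y = poly h a" "agree_on T' (G h) v"
    using assms by (auto simp: M'_def)
  have "agree_on T' (G (f + h)) (u + v)"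
    using G_add[OF f(1) h(1)] agree_on_add[OF f(3) h(3)] by (rule agree_on_trans)
  then show "(x + y, u + v) \<in> M'"
    unfolding M'_def using f h poly_over_add[OF subring_L f(1) h(1)] by force
  have "agree_on T' (G (f - h)) (u - v)"
    using G_diff[OF f(1) h(1)] agree_on_diff[OF f(3) h(3)] by (rule agree_on_trans)
  then show "(x - y, u - v) \<in> M'"
    unfolding M'_def using f h poly_over_diff[OF subring_L f(1) h(1)] by force
  have "agree_on T' (G (f * h)) (u * v)"
    using G_mult[OF f(1) h(1)] agree_on_mult[OF down_closed_trunc_idx f(3) h(3)] by (rule agree_on_trans)
  then show "(x * y, u * v) \<in> M'"
    unfolding M'_def using f h poly_over_mult[OF subring_L f(1) h(1)] by force
qed

lemma partial_lift_M': "partial_lift M'"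
  unfolding partial_lift_def
proof (intro conjI allI impI)
  fix x u v assume "(x, u) \<in> M'"
  then obtain f where f: "poly_over L f" "x = poly f a" "agree_on T' (G f) u"
    by (auto simp: M'_def)
  show "(x, v) \<in> M' \<longleftrightarrow> agree_on T' u v"
  proof
    assume "(x, v) \<in> M'"
    then obtain h where "poly_over L h" "x = poly h a" "agree_on T' (G h) v"
      by (auto simp: M'_def)
    then show "agree_on T' u v"
      using G_cong[OF f(1), of h] f by (metis agree_on_sym agree_on_trans)
  next
    assume "agree_on T' u v"
    then show "(x, v) \<in> M'"
      using f unfolding M'_def by (blast intro: agree_on_trans)
  qed
next
  fix x u y v assume "(x, u) \<in> M'" "(y, v) \<in> M'"
  from M'_closed[OF this] show "(x + y, u + v) \<in> M'" "(x - y, u - v) \<in> M'" "(x * y, u * v) \<in> M'" .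
next
  fix x u assume "(x, u) \<in> M'"
  then obtain f where f: "poly_over L f" "x = poly f a" "agree_on T' (G f) u"
    by (auto simp: M'_def)
  have "agree_on T u (G f)"
    using agree_on_subset[OF agree_on_sym[OF f(3)] T_subset_T'] .
  also have "agree_on T (G f) (\<phi> x)"
    using G_hom[OF f(1)] f(2) by simp
  finally show "agree_on T u (\<phi> x)" .
next
  show "(x ^ p, \<phi> x ^ p) \<in> M'" for x
    using M_power M_subset_M' by blast
qed

end

context hom_mod_trunc
begin

lemma power_p_add:
  assumes "CHAR('b::comm_ring_1) = p"
  shows "(x + y :: 'b) ^ p = x ^ p + y ^ p"
  using freshmans_dream[where 'a = 'b, OF _ assms[symmetric]] prime_p assms by simp

lemma power_p_diff:
  assumes "CHAR('b::comm_ring_1) = p"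
  shows "(x - y :: 'b) ^ p = x ^ p - y ^ p"
  using power_CHAR_diff[where 'a = 'b] prime_p assms by simp

lemma hom_power: "agree_on T (\<phi> (x ^ n)) (\<phi> x ^ n)"
proof (induction n)
  case (Suc n)
  have "agree_on T (\<phi> (x * x ^ n)) (\<phi> x * \<phi> (x ^ n))"
    by (rule hom_mult)
  also have "agree_on T \<dots> (\<phi> x * \<phi> x ^ n)"
    by (intro agree_on_mult[OF down_closed_trunc_idx] agree_on_refl Suc)
  finally show ?case
    by simp
qed (simp add: hom_one)

lemma power_p_inj: "(x::'a) ^ p = y ^ p \<Longrightarrow> x = y"
  using power_p_diff[OF p[symmetric], of x y] prime_gt_0_nat[OF prime_p] by simp

lemma frobenius_pairs_closed:
  assumes x: "agree_on T' (\<phi> x ^ p) u" and y: "agree_on T' (\<phi> y ^ p) v"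
  shows "agree_on T' (\<phi> (x + y) ^ p) (u + v)"
    and "agree_on T' (\<phi> (x - y) ^ p) (u - v)"
    and "agree_on T' (\<phi> (x * y) ^ p) (u * v)"
proof -
  have "agree_on T' (\<phi> (x + y) ^ p) ((\<phi> x + \<phi> y) ^ p)"
    by (rule agree_on_power_p[OF hom_add])
  also have "(\<phi> x + \<phi> y) ^ p = \<phi> x ^ p + \<phi> y ^ p"
    using power_p_add[where 'b = "'a ps"] p by simp
  also have "agree_on T' \<dots> (u + v)"
    by (rule agree_on_add[OF x y])
  finally show "agree_on T' (\<phi> (x + y) ^ p) (u + v)" .
  have "agree_on T' (\<phi> (x - y) ^ p) ((\<phi> x - \<phi> y) ^ p)"
    by (rule agree_on_power_p[OF hom_diff])
  also have "(\<phi> x - \<phi> y) ^ p = \<phi> x ^ p - \<phi> y ^ p"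
    using power_p_diff[where 'b = "'a ps"] p by simp
  also have "agree_on T' \<dots> (u - v)"
    by (rule agree_on_diff[OF x y])
  finally show "agree_on T' (\<phi> (x - y) ^ p) (u - v)" .
  have "agree_on T' (\<phi> (x * y) ^ p) ((\<phi> x * \<phi> y) ^ p)"
    by (rule agree_on_power_p[OF hom_mult])
  also have "agree_on T' ((\<phi> x * \<phi> y) ^ p) (u * v)"
    unfolding power_mult_distrib by (rule agree_on_mult[OF down_closed_trunc_idx x y])
  finally show "agree_on T' (\<phi> (x * y) ^ p) (u * v)" .
qed

lemma partial_lift_frobenius: "partial_lift {(x ^ p, u) | x u. agree_on T' (\<phi> x ^ p) u}"
  (is "partial_lift ?B")
  unfolding partial_lift_def
proof (intro conjI allI impI)
  fix z u v assume "(z, u) \<in> ?B"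
  then obtain x where x: "z = x ^ p" "agree_on T' (\<phi> x ^ p) u"
    by blast
  show "(z, v) \<in> ?B \<longleftrightarrow> agree_on T' u v"
  proof
    assume "(z, v) \<in> ?B"
    then obtain y where "z = y ^ p" "agree_on T' (\<phi> y ^ p) v"
      by blast
    moreover have "y = x"
      using x(1) \<open>z = y ^ p\<close> power_p_inj by simp
    ultimately show "agree_on T' u v"
      using x(2) by (metis agree_on_sym agree_on_trans)
  next
    assume "agree_on T' u v"
    then show "(z, v) \<in> ?B"
      using x agree_on_trans by blast
  qed
next
  fix z u z' v assume "(z, u) \<in> ?B" "(z', v) \<in> ?B"
  then obtain x y where x: "z = x ^ p" "agree_on T' (\<phi> x ^ p) u"
    and y: "z' = y ^ p" "agree_on T' (\<phi> y ^ p) v"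
    by blast
  note closed = frobenius_pairs_closed[OF x(2) y(2)]
  show "(z + z', u + v) \<in> ?B"
    using closed(1) unfolding x(1) y(1) power_p_add[OF p[symmetric], symmetric] by blast
  show "(z - z', u - v) \<in> ?B"
    using closed(2) unfolding x(1) y(1) power_p_diff[OF p[symmetric], symmetric] by blast
  show "(z * z', u * v) \<in> ?B"
    using closed(3) unfolding x(1) y(1) power_mult_distrib[symmetric] by blast
next
  fix z u assume "(z, u) \<in> ?B"
  then obtain x where x: "z = x ^ p" "agree_on T' (\<phi> x ^ p) u"
    by blast
  have "agree_on T u (\<phi> x ^ p)"
    using agree_on_subset[OF agree_on_sym[OF x(2)] T_subset_T'] .
  also have "agree_on T \<dots> (\<phi> z)"
    unfolding x(1) by (rule agree_on_sym[OF hom_power])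
  finally show "agree_on T u (\<phi> z)" .
next
  fix x
  show "(x ^ p, \<phi> x ^ p) \<in> ?B"
    using agree_on_refl by blast
qed

lemma total_partial_lift_exists: "\<exists>M. partial_lift M \<and> Domain M = UNIV"
proof -
  have "\<forall>C\<in>chains {G. partial_lift G}. \<exists>U\<in>{G. partial_lift G}. \<forall>X\<in>C. X \<subseteq> U"
  proof
    fix C assume C: "C \<in> chains {G. partial_lift G}"
    show "\<exists>U\<in>{G. partial_lift G}. \<forall>X\<in>C. X \<subseteq> U"
  proof (cases "C = {}")
    case True
    then show ?thesis
      using partial_lift_frobenius by blast
  next
    case False
    then show ?thesis
      using partial_lift_Union_chain[OF C] by blast
  qed
  qed
  from Zorn_Lemma2[OF this] obtain M where M: "partial_lift M"
    and max: "\<And>M'. partial_lift M' \<Longrightarrow> M \<subseteq> M' \<Longrightarrow> M' = M"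
    by blast
  have "a \<in> Domain M" for a
  proof (rule ccontr)
    assume "a \<notin> Domain M"
    then interpret partial_lift_extension e N p \<phi> M a
      using M by unfold_locales
    show False
      using max[OF partial_lift_M' M_subset_M'] a_in_Domain_M' \<open>a \<notin> Domain M\<close> by simp
  qed
  then show ?thesis
    using M by blast
qed

theorem hom_mod_trunc_lift:
  "\<exists>\<psi>. hom_mod_trunc e (p * N) p \<psi> \<and> (\<forall>x. agree_on T (\<psi> x) (\<phi> x))"
proof -
  obtain M where M: "partial_lift M" "Domain M = UNIV"
    using total_partial_lift_exists by blast
  define \<psi> where "\<psi> x = (SOME u. (x, u) \<in> M)" for x
  have \<psi>_in: "(x, \<psi> x) \<in> M" for x
  proof -
    have "\<exists>u. (x, u) \<in> M"
      using M(2) by blast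
    then show ?thesis
      unfolding \<psi>_def by (rule someI_ex)
  qed
  have fibre: "(x, u) \<in> M \<Longrightarrow> (x, v) \<in> M \<longleftrightarrow> agree_on T' u v"
    and closed: "(x, u) \<in> M \<Longrightarrow> (y, v) \<in> M \<Longrightarrow> (x + y, u + v) \<in> M \<and> (x * y, u * v) \<in> M"
    and hom: "(x, u) \<in> M \<Longrightarrow> agree_on T u (\<phi> x)"
    and power: "(x ^ p, \<phi> x ^ p) \<in> M" for x y u v
    using M(1) unfolding partial_lift_def by blast+
  have "hom_mod_trunc e (p * N) p \<psi>"
  proof (unfold_locales)
    show "p = CHAR('a)" "CHAR('a) > 0"
      by (fact p, fact CHAR_pos)
    show "agree_on T' (\<psi> (x + y)) (\<psi> x + \<psi> y)" "agree_on T' (\<psi> (x * y)) (\<psi> x * \<psi> y)" for x y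
      using closed[OF \<psi>_in \<psi>_in] fibre[OF \<psi>_in] by simp_all
    have "agree_on T' (\<psi> (1 ^ p)) (\<phi> 1 ^ p)"
      using fibre[OF \<psi>_in] power[of 1] by simp
    also have "agree_on T' (\<phi> 1 ^ p) (1 ^ p)"
      by (rule agree_on_power_p[OF hom_one])
    finally show "agree_on T' (\<psi> 1) 1"
      by simp
  qed
  then show ?thesis
    using hom[OF \<psi>_in] by blast
qed

end


section \<open>Extending Hasse-Schmidt derivations\<close>

lift_definition ps_of_family ::
  "nat \<Rightarrow> nat \<Rightarrow> ((nat \<Rightarrow> nat) \<Rightarrow> 'a::zero \<Rightarrow> 'a) \<Rightarrow> 'a \<Rightarrow> 'a ps" is
  "\<lambda>e N D x k. if k \<in> trunc_idx e N then D k x else 0"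
  using finite_supp_trunc_idx by auto

lemma ps_coeff_ps_of_family:
  "ps_coeff (ps_of_family e N D x) k = (if k \<in> trunc_idx e N then D k x else 0)"
  by transfer simp

lemma HS_family_mult_below:
  "HS_family I D \<Longrightarrow> k \<in> I \<Longrightarrow> D k (x * y) = (\<Sum>i\<in>below k. D i x * D (\<lambda>l. k l - i l) y)"
  unfolding HS_family_def below_def by blast

lemma hom_mod_trunc_ps_of_family:
  fixes D :: "(nat \<Rightarrow> nat) \<Rightarrow> 'a::field \<Rightarrow> 'a"
  assumes "CHAR('a) > 0" and D: "HS_family (trunc_idx e N) D"
  shows "hom_mod_trunc e N CHAR('a) (ps_of_family e N D)"
proof
  show "CHAR('a) = CHAR('a)" "CHAR('a) > 0"
    using assms(1) by simp_all
  show "agree_on (trunc_idx e N) (ps_of_family e N D (x + y)) (ps_of_family e N D x + ps_of_family e N D y)"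
    for x y using D unfolding HS_family_def by (simp add: agree_on_def ps_coeff_ps_of_family)
  show "agree_on (trunc_idx e N) (ps_of_family e N D 1) 1"
    using D unfolding HS_family_def by (simp add: agree_on_def ps_coeff_ps_of_family ps_coeff_one)
  show "agree_on (trunc_idx e N) (ps_of_family e N D (x * y)) (ps_of_family e N D x * ps_of_family e N D y)"
    for x y unfolding agree_on_def
  proof
    fix k assume k: "k \<in> trunc_idx e N"
    have "ps_coeff (ps_of_family e N D x * ps_of_family e N D y) k = (\<Sum>i\<in>below k.
        ps_coeff (ps_of_family e N D x) i * ps_coeff (ps_of_family e N D y) (\<lambda>l. k l - i l))"
      using finite_supp_trunc_idx[OF k] by (simp add: ps_coeff_mult)
    also have "\<dots> = (\<Sum>i\<in>below k. D i x * D (\<lambda>l. k l - i l) y)"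
      using trunc_idx_below[OF k] below_diff by (intro sum.cong) (simp_all add: ps_coeff_ps_of_family)
    also have "\<dots> = D k (x * y)"
      using HS_family_mult_below[OF D k] ..
    finally show "ps_coeff (ps_of_family e N D (x * y)) k =
        ps_coeff (ps_of_family e N D x * ps_of_family e N D y) k"
      using k by (simp add: ps_coeff_ps_of_family)
  qed
qed

lemma HS_family_coeffs:
  assumes "hom_mod_trunc e N p \<psi>" and "\<And>x. ps_coeff (\<psi> x) (\<lambda>_. 0) = x"
  shows "HS_family (trunc_idx e N) (\<lambda>k x. ps_coeff (\<psi> x) k)"
proof -
  interpret hom_mod_trunc e N p \<psi>
    by fact
  show ?thesis
    unfolding HS_family_def
  proof (intro conjI ballI allI)
    show "(\<lambda>x. ps_coeff (\<psi> x) (\<lambda>_. 0)) = id"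
      using assms(2) by auto
    fix k x y assume k: "k \<in> trunc_idx e N"
    show "ps_coeff (\<psi> (x + y)) k = ps_coeff (\<psi> x) k + ps_coeff (\<psi> y) k"
      using hom_add k by (simp add: agree_on_def)
    show "ps_coeff (\<psi> 1) k = (if k = (\<lambda>_. 0) then 1 else 0)"
      using hom_one k by (simp add: agree_on_def ps_coeff_one)
    show "ps_coeff (\<psi> (x * y)) k =
        (\<Sum>i\<in>{i. \<forall>l. i l \<le> k l}. ps_coeff (\<psi> x) i * ps_coeff (\<psi> y) (\<lambda>l. k l - i l))"
      using hom_mult k finite_supp_trunc_idx[OF k] by (simp add: agree_on_def ps_coeff_mult below_def)
  qed
qed

theorem HS_family_lift:
  fixes D :: "(nat \<Rightarrow> nat) \<Rightarrow> 'a::field \<Rightarrow> 'a"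
  assumes "CHAR('a) > 0" and "N > 0" and D: "HS_family (trunc_idx e N) D"
  shows "\<exists>D'. HS_family (trunc_idx e (CHAR('a) * N)) D' \<and> (\<forall>i\<in>trunc_idx e N. D' i = D i)"
proof -
  interpret hom_mod_trunc e N "CHAR('a)" "ps_of_family e N D"
    using hom_mod_trunc_ps_of_family[OF assms(1) D] .
  obtain \<psi> where \<psi>: "hom_mod_trunc e (CHAR('a) * N) CHAR('a) \<psi>"
    and agree: "\<And>x. agree_on (trunc_idx e N) (\<psi> x) (ps_of_family e N D x)"
    using hom_mod_trunc_lift by blast
  have coeff_\<psi>: "ps_coeff (\<psi> x) i = D i x" if "i \<in> trunc_idx e N" for i x
    using agree[of x] that by (simp add: agree_on_def ps_coeff_ps_of_family)
  have "ps_coeff (\<psi> x) (\<lambda>_. 0) = x" for x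
    using coeff_\<psi>[OF zero_in_trunc_idx[OF \<open>N > 0\<close>]] D by (simp add: HS_family_def)
  then have "HS_family (trunc_idx e (CHAR('a) * N)) (\<lambda>k x. ps_coeff (\<psi> x) k)"
    by (rule HS_family_coeffs[OF \<psi>])
  then show ?thesis
    using coeff_\<psi> by blast
qed

lemma HS_family_tower:
  fixes D :: "(nat \<Rightarrow> nat) \<Rightarrow> 'a::field \<Rightarrow> 'a"
  assumes "CHAR('a) > 0" and "N > 0" and "HS_family (trunc_idx e N) D"
  obtains Ds where "Ds 0 = D" "\<And>n. HS_family (trunc_idx e (CHAR('a) ^ n * N)) (Ds n)"
    "\<And>n i. i \<in> trunc_idx e (CHAR('a) ^ n * N) \<Longrightarrow> Ds (Suc n) i = Ds n i"
proof -
  let ?P = "\<lambda>n D'. HS_family (trunc_idx e (CHAR('a) ^ n * N)) D' \<and> (n = 0 \<longrightarrow> D' = D)"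
  have "\<exists>Ds. \<forall>n. ?P n (Ds n) \<and> (\<forall>i\<in>trunc_idx e (CHAR('a) ^ n * N). Ds (Suc n) i = Ds n i)"
  proof (rule dependent_nat_choice)
    show "\<exists>D'. ?P 0 D'"
      using assms(3) by auto
    fix D' n assume "?P n D'"
    moreover have "CHAR('a) ^ n * N > 0"
      using assms(1,2) by simp
    ultimately show "\<exists>D''. ?P (Suc n) D'' \<and> (\<forall>i\<in>trunc_idx e (CHAR('a) ^ n * N). D'' i = D' i)"
      using HS_family_lift[OF assms(1)] by (simp add: mult.assoc)
  qed
  then show ?thesis
    using that by blast
qed

lemma mindex_in_trunc_idx:
  assumes "k \<in> mindex e" and "\<And>n. n \<le> Ns n"
  shows "k \<in> trunc_idx e (Ns (Suc (\<Sum>l<e. k l)))"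
proof -
  have "k l < Ns (Suc (\<Sum>l<e. k l))" if "l < e" for l
    using member_le_sum[of l "{..<e}" k] that assms(2)[of "Suc (\<Sum>l<e. k l)"] by simp
  then show ?thesis
    using assms(1) by (simp add: trunc_idx_def)
qed

lemma compatible_tower_stable:
  assumes compat: "\<And>n i. i \<in> trunc_idx e (Ns n) \<Longrightarrow> Ds (Suc n) i = Ds n i"
    and "mono Ns" and i: "i \<in> trunc_idx e (Ns n)" and "n \<le> n'"
  shows "Ds n' i = Ds n i"
  using \<open>n \<le> n'\<close>
proof (induction n' rule: dec_induct)
  case (step n')
  have "i \<in> trunc_idx e (Ns n')"
    using i trunc_idx_mono[OF monoD[OF \<open>mono Ns\<close> step(1)]] by blast
  then show ?case
    using compat step(3) by simp
qed simp

lemma HS_derivation_limit: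
  assumes HS: "\<And>n. HS_family (trunc_idx e (Ns n)) (Ds n)"
    and compat: "\<And>n i. i \<in> trunc_idx e (Ns n) \<Longrightarrow> Ds (Suc n) i = Ds n i"
    and "mono Ns" and unbounded: "\<And>n. n \<le> Ns n"
  obtains D' where "HS_derivation e D'" "\<And>n i. i \<in> trunc_idx e (Ns n) \<Longrightarrow> D' i = Ds n i"
proof -
  define level where "level k = Suc (\<Sum>l<e. k l)" for k :: "nat \<Rightarrow> nat"
  define D' where "D' k = Ds (level k) k" for k
  have in_level: "k \<in> trunc_idx e (Ns (level k))" if "k \<in> mindex e" for k
    unfolding level_def using that unbounded by (rule mindex_in_trunc_idx)
  have stable: "Ds n' i = Ds n i" if "i \<in> trunc_idx e (Ns n)" "n \<le> n'" for i n n'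
    using compatible_tower_stable[of e Ns Ds i n n', OF compat \<open>mono Ns\<close> that] .
  have agree: "D' i = Ds n i" if "i \<in> trunc_idx e (Ns n)" for i n
  proof -
    have "i \<in> trunc_idx e (Ns (level i))"
      using that by (intro in_level) (simp add: trunc_idx_def)
    then have "Ds (max n (level i)) i = Ds (level i) i"
      by (rule stable) simp
    moreover have "Ds (max n (level i)) i = Ds n i"
      using that by (rule stable) simp
    ultimately show ?thesis
      by (simp add: D'_def)
  qed
  have "HS_family (mindex e) D'"
    unfolding HS_family_def
  proof (intro conjI ballI allI)
    show "D' (\<lambda>_. 0) = id"
      using HS by (simp add: D'_def HS_family_def)
    fix k x y assume "k \<in> mindex e"
    then have k: "k \<in> trunc_idx e (Ns (level k))"
      by (rule in_level)
    have below: "D' i = Ds (level k) i" if "i \<in> below k" for i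
      using agree trunc_idx_below[OF k that] by blast
    have "k \<in> below k" "(\<lambda>l. k l - i l) \<in> below k" for i
      by (simp_all add: below_def)
    with below HS[of "level k"] k show "D' k (x + y) = D' k x + D' k y"
      "D' k 1 = (if k = (\<lambda>_. 0) then 1 else 0)"
      "D' k (x * y) = (\<Sum>i\<in>{i. \<forall>l. i l \<le> k l}. D' i x * D' (\<lambda>l. k l - i l) y)"
      unfolding HS_family_def below_def by simp_all
  qed
  then show ?thesis
    using that agree by (simp add: HS_derivation_def)
qed

lemma le_power_mult:
  fixes p M :: nat
  assumes "p \<ge> 2" and "M > 0"
  shows "n \<le> p ^ n * M"
proof -
  have "n < 2 ^ n"
    by (rule less_exp)
  also have "\<dots> \<le> p ^ n"
    using assms(1) by (rule power_mono) simp
  also have "\<dots> \<le> p ^ n * M"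
    using assms(2) by simp
  finally show ?thesis
    by simp
qed

theorem corollary2p5:
  fixes D :: "(nat \<Rightarrow> nat) \<Rightarrow> 'a::field \<Rightarrow> 'a"
  assumes "CHAR('a) > 0" and "e > 0" and "m > 0"
    and "truncated_HS_derivation m e D"
  shows "\<exists>D'. HS_derivation e D' \<and> (\<forall>i\<in>trunc_idx e (CHAR('a) ^ m). D' i = D i)"
proof -
  let ?p = "CHAR('a)"
  have D: "HS_family (trunc_idx e (?p ^ m)) D"
    using assms(4) by (simp add: truncated_HS_derivation_def)
  obtain Ds where Ds: "Ds 0 = D" "\<And>n. HS_family (trunc_idx e (?p ^ n * ?p ^ m)) (Ds n)"
    "\<And>n i. i \<in> trunc_idx e (?p ^ n * ?p ^ m) \<Longrightarrow> Ds (Suc n) i = Ds n i"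
    using HS_family_tower[OF assms(1) _ D] assms(1) by auto
  have p2: "?p \<ge> 2"
    using prime_ge_2_nat[OF prime_CHAR_semidom[OF assms(1)]] .
  have "mono (\<lambda>n. ?p ^ n * ?p ^ m)"
    using p2 by (intro monoI mult_right_mono power_increasing) auto
  moreover have "n \<le> ?p ^ n * ?p ^ m" for n
    using p2 assms(1) by (intro le_power_mult) simp_all
  ultimately obtain D' where "HS_derivation e D'"
    "\<And>n i. i \<in> trunc_idx e (?p ^ n * ?p ^ m) \<Longrightarrow> D' i = Ds n i"
    using HS_derivation_limit[where Ns = "\<lambda>n. ?p ^ n * ?p ^ m", OF Ds(2,3)] by blast
  then show ?thesis
    using Ds(1) by (metis mult_1 power_0)
qed

end
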